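(* Let $\mathcal{P}$ be a statistical model for the distribution of two independent samples $\mathbb{X}=(X_i)_{1\le i\le n}$ and $\mathbb{Y}=(Y_j)_{1\le j\le m}$, each i.i.d., with square-integrable marginal distributions $\mathbb{P}_X,\mathbb{P}_Y$ on $\mathbb{R}^d$ (or a separable Hilbert space), with means $\mu=\mathbb{E}[X_1]$, $\nu=\mathbb{E}[Y_1]$ and covariances $\Sigma=\mathrm{Cov}(X_1)$, $S=\mathrm{Cov}(Y_1)$. For covariances $(\Sigma,S)$ let $\mathcal{P}_{\Sigma,S}=\{\mathbb{P}\in\mathcal{P}:\mathrm{Cov}(\mathbb{P}_X)=\Sigma,\ \mathrm{Cov}(\mathbb{P}_Y)=S\}$. Let $U$ be a real-valued statistic of the data and assume: (A1) for every $(\Sigma,S)$ and every $\alpha\in(0,1)$ there exist $q_1=q_1(\Sigma,S,\alpha)\ge0$ and $q_2=q_2(\Sigma,S,\alpha)\ge 0$ such that for every $\mathbb{P}\in\mathcal{P}_{\Sigma,S}$, $\mathbb{P}\big(|U-\|\mu-\nu\|^2|\ge \|\mu-\nu\|q_1+q_2\big)\le\alpha$; (A2) for every $\alpha\in(0,1)$ there exist statistics $\widehat Q_1(\alpha),\widehat Q_2(\alpha)$ with values in $\mathbb{R}_+$ such that for every $(\Sigma,S)$ and every $\mathbb{P}\in\mathcal{P}_{\Sigma,S}$, $\mathbb{P}\big(|q_1(\Sigma,S,\alpha)-\widehat Q_1(\alpha)|\ge \tfrac12 q_1(\Sigma,S,\alpha)\big)\le\alpha$ and $\mathbb{P}\big(|q_2(\Sigma,S,\alpha)-\widehat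 Q_2(\alpha)|\ge \tfrac12 q_2(\Sigma,S,\alpha)\big)\le\alpha$. Given $\eta\ge0$ and $\alpha\in(0,1)$, define the test $T=\mathbf{1}\{U-\eta^2>2\eta\widehat Q_1(\alpha)+2\widehat Q_2(\alpha)\}$. Then for any $(\Sigma,S)$, writing $q_i=q_i(\Sigma,S,\alpha)$, provided $\delta>2q_1+\min\big(2\sqrt{q_2},\,2\eta^{-1}q_2\big)$ (with $2\eta^{-1}q_2:=+\infty$ when $\eta=0$), it holds for every $\mathbb{P}\in\mathcal{P}_{\Sigma,S}$: $\mathbb{P}(T=1)\le3\alpha$ if $\|\mu-\nu\|\le\eta$, and $\mathbb{P}(T=0)\le 3\alpha$ if $\|\mu-\nu\|>\eta+\delta$.
   Context: $\|\cdot\|$ denotes the Euclidean (Hilbert) norm. A distribution $\mathbb{P}\in\mathcal{P}$ specifies the marginal laws $\mathbb{P}_X,\mathbb{P}_Y$ of the two independent samples; $\mathbb{P}(\cdot)$ denotes probability under that joint law. *)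

theory Defs
  imports "HOL-Probability.Probability"
begin

definition sq_int_law :: "'a::{real_inner,banach,second_countable_topology} measure \<Rightarrow> bool" where
  "sq_int_law P \<longleftrightarrow> prob_space P \<and> sets P = sets borel \<and> integrable P (\<lambda>x. (norm x)\<^sup>2)"

definition mean :: "'a::{real_inner,banach,second_countable_topology} measure \<Rightarrow> 'a" where
  "mean P = (\<integral>x. x \<partial>P)"

text \<open>Covariance operator, as the bilinear form (u,v) |-> E[<X-mu,u><X-mu,v>].\<close>
definition cov :: "'a::{real_inner,banach,second_countable_topology} measure \<Rightarrow> 'a \<Rightarrow> 'a \<Rightarrow> real" where
  "cov P u v = (\<integral>x. ((x - mean P) \<bullet> u) * ((x - mean P) \<bullet> v) \<partial>P)"

text \<open>Joint law of the two independent i.i.d. samples X_0..X_{n-1} ~ PX and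
  Y_0..Y_{m-1} ~ PY (data = pair of sample vectors).\<close>
definition joint_law :: "nat \<Rightarrow> nat \<Rightarrow> 'a::{real_inner,banach,second_countable_topology} measure
    \<Rightarrow> 'a measure \<Rightarrow> ((nat \<Rightarrow> 'a) \<times> (nat \<Rightarrow> 'a)) measure" where
  "joint_law n m PX PY = (PiM {..<n} (\<lambda>_. PX)) \<Otimes>\<^sub>M (PiM {..<m} (\<lambda>_. PY))"

definition test_T :: "('d \<Rightarrow> real) \<Rightarrow> ('d \<Rightarrow> real) \<Rightarrow> ('d \<Rightarrow> real) \<Rightarrow> real \<Rightarrow> 'd \<Rightarrow> nat" where
  "test_T U Q1 Q2 \<eta> \<omega> = (if U \<omega> - \<eta>\<^sup>2 > 2 * \<eta> * Q1 \<omega> + 2 * Q2 \<omega> then 1 else 0)"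

end

theory Submission
  imports Defs
begin

text \<open>Off the three events on which the concentration bound (A1) or one of the estimates (A2)
  fails, everything is deterministic. There the estimates satisfy \<open>q\<^sub>i < 2 Q\<^sub>i < 3 q\<^sub>i\<close>, so with
  \<open>D = \<parallel>\<mu> - \<nu>\<parallel>\<close> the null \<open>D \<le> \<eta>\<close> gives \<open>U - \<eta>\<^sup>2 < \<eta> q\<^sub>1 + q\<^sub>2 < 2\<eta> Q\<^sub>1 + 2 Q\<^sub>2\<close>. Under separation
  either alternative in the bound on \<open>\<delta>\<close> yields \<open>D\<^sup>2 - \<eta>\<^sup>2 > q\<^sub>1 (D + 3\<eta>) + 4 q\<^sub>2\<close>, whence
  \<open>U - \<eta>\<^sup>2 > 3\<eta> q\<^sub>1 + 3 q\<^sub>2 > 2\<eta> Q\<^sub>1 + 2 Q\<^sub>2\<close>. A union bound over the three events gives \<open>3\<alpha>\<close>.\<close>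

lemma half_accurate_estimate_bounds:
  fixes q Q :: real
  assumes "\<bar>q - Q\<bar> < q / 2"
  shows "q < 2 * Q" and "2 * Q < 3 * q"
  using assms by linarith+

lemma accept_under_null:
  fixes D \<eta> u q1 q2 Q1 Q2 :: real
  assumes "0 \<le> D" "D \<le> \<eta>"
    and "\<bar>u - D\<^sup>2\<bar> < D * q1 + q2" "\<bar>q1 - Q1\<bar> < q1 / 2" "\<bar>q2 - Q2\<bar> < q2 / 2"
  shows "u - \<eta>\<^sup>2 < 2 * \<eta> * Q1 + 2 * Q2"
proof -
  have Q1: "q1 < 2 * Q1" and Q2: "q2 < 2 * Q2"
    using half_accurate_estimate_bounds assms(4,5) by auto
  have "D\<^sup>2 \<le> \<eta>\<^sup>2"
    using assms(1,2) by (simp add: power_mono)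
  moreover have "D * q1 \<le> \<eta> * q1"
    using assms(2,4) by (intro mult_right_mono) linarith+
  moreover have "\<eta> * q1 \<le> \<eta> * (2 * Q1)"
    using assms(1,2) Q1 by (intro mult_left_mono) auto
  ultimately show ?thesis
    using assms(3) Q2 by (simp add: abs_less_iff)
qed

lemma separation_margin:
  fixes D \<eta> \<delta> q1 q2 :: real
  assumes "0 \<le> \<eta>" "0 \<le> q1" "0 \<le> q2" "\<eta> + \<delta> < D"
    and \<delta>: "2 * q1 + (if \<eta> = 0 then 2 * sqrt q2 else min (2 * sqrt q2) (2 * q2 / \<eta>)) < \<delta>"
  shows "q1 * (D + 3 * \<eta>) + 4 * q2 < D\<^sup>2 - \<eta>\<^sup>2"
proof -
  have "0 \<le> (if \<eta> = 0 then 2 * sqrt q2 else min (2 * sqrt q2) (2 * q2 / \<eta>))"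
    using assms(1,3) by auto
  then have "\<eta> \<le> D"
    using assms(2,4) \<delta> by linarith
  obtain x where "0 \<le> x" "2 * q1 + x < \<delta>" and x: "4 * q2 \<le> x * (D + \<eta>)"
  proof (cases "\<eta> = 0 \<or> sqrt q2 \<le> q2 / \<eta>")
    case True
    then have "2 * q1 + 2 * sqrt q2 < \<delta>"
      using \<delta> by (auto split: if_splits)
    moreover have "2 * sqrt q2 * (2 * sqrt q2) \<le> 2 * sqrt q2 * (D + \<eta>)"
      using calculation assms by (intro mult_left_mono) auto
    ultimately show ?thesis
      using that[of "2 * sqrt q2"] assms(3) by simp
  next
    case False
    then have "0 < \<eta>" "2 * q1 + 2 * q2 / \<eta> < \<delta>"
      using assms(1) \<delta> by auto
    moreover have "2 * q2 / \<eta> * (2 * \<eta>) \<le> 2 * q2 / \<eta> * (D + \<eta>)"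
      using calculation assms \<open>\<eta> \<le> D\<close> by (intro mult_left_mono) auto
    ultimately show ?thesis
      using that[of "2 * q2 / \<eta>"] assms(3) by simp
  qed
  have "q1 * (D + 3 * \<eta>) + 4 * q2 \<le> 2 * q1 * (D + \<eta>) + x * (D + \<eta>)"
    using x assms(2) \<open>\<eta> \<le> D\<close> mult_left_mono[of "D + 3 * \<eta>" "2 * (D + \<eta>)" q1]
    by (simp add: algebra_simps)
  also have "\<dots> = (2 * q1 + x) * (D + \<eta>)"
    by (simp add: algebra_simps)
  also have "\<dots> < (D - \<eta>) * (D + \<eta>)"
    using \<open>2 * q1 + x < \<delta>\<close> assms(1,2,4) \<open>0 \<le> x\<close> by (intro mult_strict_right_mono) auto
  also have "\<dots> = D\<^sup>2 - \<eta>\<^sup>2"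
    by (simp add: power2_eq_square algebra_simps)
  finally show ?thesis .
qed

lemma reject_under_separation:
  fixes D \<eta> u q1 q2 Q1 Q2 :: real
  assumes "0 \<le> \<eta>" "q1 * (D + 3 * \<eta>) + 4 * q2 < D\<^sup>2 - \<eta>\<^sup>2"
    and "\<bar>u - D\<^sup>2\<bar> < D * q1 + q2" "\<bar>q1 - Q1\<bar> < q1 / 2" "\<bar>q2 - Q2\<bar> < q2 / 2"
  shows "2 * \<eta> * Q1 + 2 * Q2 < u - \<eta>\<^sup>2"
proof -
  have "2 * Q1 < 3 * q1" and "2 * Q2 < 3 * q2"
    using half_accurate_estimate_bounds assms(4,5) by auto
  then have "\<eta> * (2 * Q1) \<le> \<eta> * (3 * q1)"
    using assms(1) by (intro mult_left_mono) auto
  then show ?thesis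
    using assms(2,3) \<open>2 * Q2 < 3 * q2\<close> by (simp add: abs_less_iff algebra_simps)
qed

lemma test_T_error_le_union_bound:
  fixes M :: "'d measure" and U Q1 Q2 :: "'d \<Rightarrow> real"
  assumes "finite_measure M"
    and U: "U \<in> borel_measurable M" and Q1: "Q1 \<in> borel_measurable M"
    and Q2: "Q2 \<in> borel_measurable M"
    and "measure M {\<omega> \<in> space M. D * q1 + q2 \<le> \<bar>U \<omega> - D\<^sup>2\<bar>} \<le> \<alpha>"
    and "measure M {\<omega> \<in> space M. q1 / 2 \<le> \<bar>q1 - Q1 \<omega>\<bar>} \<le> \<alpha>"
    and "measure M {\<omega> \<in> space M. q2 / 2 \<le> \<bar>q2 - Q2 \<omega>\<bar>} \<le> \<alpha>"
    and good: "\<And>\<omega>. \<bar>U \<omega> - D\<^sup>2\<bar> < D * q1 + q2 \<Longrightarrow> \<bar>q1 - Q1 \<omega>\<bar> < q1 / 2 \<Longrightarrow>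
                 \<bar>q2 - Q2 \<omega>\<bar> < q2 / 2 \<Longrightarrow> test_T U Q1 Q2 \<eta> \<omega> \<noteq> k"
  shows "measure M {\<omega> \<in> space M. test_T U Q1 Q2 \<eta> \<omega> = k} \<le> 3 * \<alpha>"
proof -
  interpret finite_measure M by fact
  define B1 where "B1 = {\<omega> \<in> space M. D * q1 + q2 \<le> \<bar>U \<omega> - D\<^sup>2\<bar>}"
  define B2 where "B2 = {\<omega> \<in> space M. q1 / 2 \<le> \<bar>q1 - Q1 \<omega>\<bar>}"
  define B3 where "B3 = {\<omega> \<in> space M. q2 / 2 \<le> \<bar>q2 - Q2 \<omega>\<bar>}"
  have sets: "B1 \<in> sets M" "B2 \<in> sets M" "B3 \<in> sets M"
    unfolding B1_def B2_def B3_def using U Q1 Q2 by measurable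
  have "{\<omega> \<in> space M. test_T U Q1 Q2 \<eta> \<omega> = k} \<subseteq> B1 \<union> B2 \<union> B3"
    unfolding B1_def B2_def B3_def using good by force
  then have "measure M {\<omega> \<in> space M. test_T U Q1 Q2 \<eta> \<omega> = k} \<le> measure M (B1 \<union> B2 \<union> B3)"
    using sets by (intro finite_measure_mono) auto
  also have "\<dots> \<le> measure M B1 + measure M B2 + measure M B3"
    using sets measure_Un_le[of B1 M B2] measure_Un_le[of "B1 \<union> B2" M B3] by auto
  finally show ?thesis
    using assms(5-7) unfolding B1_def B2_def B3_def by linarith
qed

lemma prob_space_joint_law:
  assumes "prob_space PX" "prob_space PY"
  shows "prob_space (joint_law n m PX PY)"
  unfolding joint_law_def using assms by (intro prob_space_pair prob_space_PiM) auto

theorem theorem1: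
  fixes n m :: nat
    and \<P> :: "('a::{real_inner,banach,second_countable_topology} measure \<times> 'a measure) set"
    and U :: "(nat \<Rightarrow> 'a) \<times> (nat \<Rightarrow> 'a) \<Rightarrow> real"
    and Q1 Q2 :: "real \<Rightarrow> (nat \<Rightarrow> 'a) \<times> (nat \<Rightarrow> 'a) \<Rightarrow> real"
    and q1 q2 :: "('a \<Rightarrow> 'a \<Rightarrow> real) \<Rightarrow> ('a \<Rightarrow> 'a \<Rightarrow> real) \<Rightarrow> real \<Rightarrow> real"
    and PX PY :: "'a measure"
    and \<eta> \<alpha> \<delta> :: real
  assumes n_pos: "n \<ge> 1" and m_pos: "m \<ge> 1"
    and model: "\<forall>(PX', PY') \<in> \<P>. sq_int_law PX' \<and> sq_int_law PY'"
    and U_meas: "\<forall>(PX', PY') \<in> \<P>. U \<in> borel_measurable (joint_law n m PX' PY')"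
    and q_nonneg: "\<forall>\<Sigma> S \<beta>. 0 < \<beta> \<and> \<beta> < 1 \<longrightarrow> q1 \<Sigma> S \<beta> \<ge> 0 \<and> q2 \<Sigma> S \<beta> \<ge> 0"
    and A1: "\<forall>\<beta>. 0 < \<beta> \<and> \<beta> < 1 \<longrightarrow> (\<forall>(PX', PY') \<in> \<P>.
              measure (joint_law n m PX' PY')
                {\<omega> \<in> space (joint_law n m PX' PY').
                   \<bar>U \<omega> - (norm (mean PX' - mean PY'))\<^sup>2\<bar>
                     \<ge> norm (mean PX' - mean PY') * q1 (cov PX') (cov PY') \<beta> + q2 (cov PX') (cov PY') \<beta>}
              \<le> \<beta>)"
    and Q_meas: "\<forall>\<beta>. 0 < \<beta> \<and> \<beta> < 1 \<longrightarrow> (\<forall>(PX', PY') \<in> \<P>.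
              Q1 \<beta> \<in> borel_measurable (joint_law n m PX' PY') \<and>
              Q2 \<beta> \<in> borel_measurable (joint_law n m PX' PY') \<and>
              (\<forall>\<omega> \<in> space (joint_law n m PX' PY'). Q1 \<beta> \<omega> \<ge> 0 \<and> Q2 \<beta> \<omega> \<ge> 0))"
    and A2: "\<forall>\<beta>. 0 < \<beta> \<and> \<beta> < 1 \<longrightarrow> (\<forall>(PX', PY') \<in> \<P>.
              measure (joint_law n m PX' PY')
                {\<omega> \<in> space (joint_law n m PX' PY').
                   \<bar>q1 (cov PX') (cov PY') \<beta> - Q1 \<beta> \<omega>\<bar> \<ge> q1 (cov PX') (cov PY') \<beta> / 2} \<le> \<beta> \<and>
              measure (joint_law n m PX' PY')
                {\<omega> \<in> space (joint_law n m PX' PY').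
                   \<bar>q2 (cov PX') (cov PY') \<beta> - Q2 \<beta> \<omega>\<bar> \<ge> q2 (cov PX') (cov PY') \<beta> / 2} \<le> \<beta>)"
    and P_in: "(PX, PY) \<in> \<P>"
    and eta_nonneg: "\<eta> \<ge> 0"
    and alpha: "0 < \<alpha>" "\<alpha> < 1"
    and delta: "\<delta> > 2 * q1 (cov PX) (cov PY) \<alpha> +
                  (if \<eta> = 0 then 2 * sqrt (q2 (cov PX) (cov PY) \<alpha>)
                   else min (2 * sqrt (q2 (cov PX) (cov PY) \<alpha>)) (2 * q2 (cov PX) (cov PY) \<alpha> / \<eta>))"
  shows "(norm (mean PX - mean PY) \<le> \<eta> \<longrightarrow>
           measure (joint_law n m PX PY)
             {\<omega> \<in> space (joint_law n m PX PY). test_T U (Q1 \<alpha>) (Q2 \<alpha>) \<eta> \<omega> = 1} \<le> 3 * \<alpha>)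
       \<and> (norm (mean PX - mean PY) > \<eta> + \<delta> \<longrightarrow>
           measure (joint_law n m PX PY)
             {\<omega> \<in> space (joint_law n m PX PY). test_T U (Q1 \<alpha>) (Q2 \<alpha>) \<eta> \<omega> = 0} \<le> 3 * \<alpha>)"
proof -
  let ?M = "joint_law n m PX PY" and ?D = "norm (mean PX - mean PY)"
  let ?q1 = "q1 (cov PX) (cov PY) \<alpha>" and ?q2 = "q2 (cov PX) (cov PY) \<alpha>"
  have "prob_space ?M"
    using model P_in by (auto simp: sq_int_law_def intro: prob_space_joint_law)
  then have finite: "finite_measure ?M"
    by (rule prob_space.finite_measure)
  have meas: "U \<in> borel_measurable ?M" "Q1 \<alpha> \<in> borel_measurable ?M" "Q2 \<alpha> \<in> borel_measurable ?M"
    using U_meas Q_meas P_in alpha by auto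
  have bad_events:
    "measure ?M {\<omega> \<in> space ?M. ?D * ?q1 + ?q2 \<le> \<bar>U \<omega> - ?D\<^sup>2\<bar>} \<le> \<alpha>"
    "measure ?M {\<omega> \<in> space ?M. ?q1 / 2 \<le> \<bar>?q1 - Q1 \<alpha> \<omega>\<bar>} \<le> \<alpha>"
    "measure ?M {\<omega> \<in> space ?M. ?q2 / 2 \<le> \<bar>?q2 - Q2 \<alpha> \<omega>\<bar>} \<le> \<alpha>"
    using A1 A2 P_in alpha by auto
  note union_bound = test_T_error_le_union_bound[OF finite meas bad_events]
  have q: "0 \<le> ?q1" "0 \<le> ?q2"
    using q_nonneg alpha by auto
  show ?thesis
  proof (intro conjI impI)
    assume "?D \<le> \<eta>"
    from accept_under_null[OF norm_ge_zero this]
    show "measure ?M {\<omega> \<in> space ?M. test_T U (Q1 \<alpha>) (Q2 \<alpha>) \<eta> \<omega> = 1} \<le> 3 * \<alpha>"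
      by (intro union_bound) (fastforce simp: test_T_def)
  next
    assume "\<eta> + \<delta> < ?D"
    from reject_under_separation[OF eta_nonneg separation_margin[OF eta_nonneg q this delta]]
    show "measure ?M {\<omega> \<in> space ?M. test_T U (Q1 \<alpha>) (Q2 \<alpha>) \<eta> \<omega> = 0} \<le> 3 * \<alpha>"
      by (intro union_bound) (fastforce simp: test_T_def)
  qed
qed

end
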